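(* For $n\in\mathbb N$, $$\Phi^*_n(-1)=\begin{cases}-2 & n=1,\\ 0 & n=2^a,\ a\ge1,\\ p^b & n=2^ap^b \text{ with } p \text{ an odd prime},\ a,b\ge1,\\ 1 & \text{otherwise}.\end{cases}$$
   Context: $d\mid\mid n$ means $d\mid n$ and $\gcd(d,n/d)=1$; $(j,n)_*=\max\{d: d\mid j,\ d\mid\mid n\}$; $\Phi^*_n(x)=\prod_{1\le j\le n,\ (j,n)_*=1}(x-e^{2\pi i j/n})$. *)

theory Defs
  imports "HOL-Analysis.Analysis" "HOL-Computational_Algebra.Polynomial"
begin

definition unitary_dvd :: "nat \<Rightarrow> nat \<Rightarrow> bool" where
  "unitary_dvd d n \<longleftrightarrow> d dvd n \<and> coprime d (n div d)"

definition gcd_star :: "nat \<Rightarrow> nat \<Rightarrow> nat" where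
  "gcd_star j n = Max {d. d dvd j \<and> unitary_dvd d n}"

definition Phi_star :: "nat \<Rightarrow> complex poly" where
  "Phi_star n = (\<Prod>j\<in>{j\<in>{1..n}. gcd_star j n = 1}.
      [:- exp (2 * of_real pi * \<i> * of_nat j / of_nat n), 1:])"

end

theory Submission
  imports Defs "HOL-Computational_Algebra.Fundamental_Theorem_Algebra"
begin

text \<open>
  The condition \<open>(j,n)\<^sub>* = 1\<close> says that no prime power part \<open>p\<^sup>e \<parallel> n\<close> divides \<open>j\<close>, so
  \<open>\<Phi>\<^sup>*\<^sub>n(-1)\<close> is the product of the factors \<open>-1 - \<zeta>\<^sup>j\<close> over the \<open>j \<le> n\<close> that survive a sieve by
  these pairwise coprime moduli.  For \<open>n = 2\<^sup>a\<close> the survivor \<open>j = n/2\<close> gives a zero factor;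
  otherwise the factor at \<open>\<zeta>\<^sup>j = -1\<close> never occurs and may be replaced by \<open>1\<close>.  Sieving out one
  more coprime modulus \<open>u\<close> removes exactly the multiples \<open>j = u k\<close>, whose roots \<open>\<zeta>\<^sup>u\<^sup>k\<close> run
  through the \<open>n/u\<close>-th roots of unity, so it divides the sieved product by the one for \<open>n/u\<close>.
  By induction everything reduces to the full product over the \<open>N\<close>-th roots of unity, which is
  \<open>-2\<close> for odd \<open>N\<close> and, without the vanishing factor, \<open>-N\<close> (the derivative of \<open>x\<^sup>N - 1\<close> at
  \<open>-1\<close>) for even \<open>N\<close>.  Hence odd sieves give \<open>1\<close>, while for even \<open>N\<close> the quotients
  \<open>-N / -(N/u) = u\<close> produce \<open>p\<^sup>b\<close> when \<open>n = 2\<^sup>a p\<^sup>b\<close> and \<open>1\<close> otherwise.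
\<close>

lemma monom_minus_1_eq_prod_roots_unity:
  assumes N: "N \<ge> 1"
  shows "(monom 1 N - 1 :: complex poly) = (\<Prod>z\<in>{z. z^N = 1}. [:-z, 1:])"
proof -
  define p :: "complex poly" where "p = monom 1 N - 1"
  have poly_p: "poly p z = z^N - 1" for z by (simp add: p_def poly_monom)
  have poly_pderiv_p: "poly (pderiv p) z = of_nat N * z^(N-1)" for z
    by (simp add: p_def pderiv_diff pderiv_monom poly_monom)
  have coeff_N: "coeff p N = 1" using N by (simp add: p_def coeff_monom)
  then have "p \<noteq> 0" by auto
  have "degree p = N"
  proof (rule antisym)
    show "degree p \<le> N" unfolding p_def
      by (metis degree_diff_le degree_monom_le degree_1 le0)
    show "N \<le> degree p" using coeff_N by (simp add: le_degree)
  qed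
  then have "lead_coeff p = 1" using coeff_N by simp
  have "rsquarefree p"
    unfolding rsquarefree_roots
  proof (intro allI notI)
    fix a assume "poly p a = 0 \<and> poly (pderiv p) a = 0"
    then have "a^N = 1" "of_nat N * a^(N-1) = 0" using poly_p poly_pderiv_p by auto
    then show False using N by (cases "a = 0") (auto simp: power_0_left)
  qed
  have "p = smult (lead_coeff p) (\<Prod>z | poly p z = 0. [:-z, 1:] ^ order z p)"
    by (rule complex_poly_decompose[symmetric])
  also have "\<dots> = (\<Prod>z\<in>{z. z^N = 1}. [:-z, 1:])"
    unfolding \<open>lead_coeff p = 1\<close> smult_1_left
    by (intro prod.cong) (auto simp: rsquarefree_root_order[OF \<open>rsquarefree p\<close> _ \<open>p \<noteq> 0\<close>] poly_p)
  finally show ?thesis by (simp add: p_def)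
qed

text \<open>The factor \<open>-1 - z\<close> of \<open>\<Phi>\<^sup>*\<^sub>n(-1)\<close>, with its zero at \<open>z = -1\<close> replaced by \<open>1\<close> so that the
  sieved products below never vanish and can be cancelled.\<close>
definition factor_at_neg1 :: "complex \<Rightarrow> complex" where
  "factor_at_neg1 z = (if z = -1 then 1 else -1 - z)"

lemma prod_roots_unity_factor_at_neg1:
  assumes N: "N \<ge> 1"
  shows "(\<Prod>z\<in>{z::complex. z^N = 1}. factor_at_neg1 z) = (if odd N then -2 else - of_nat N)"
proof -
  define R where "R = {z::complex. z^N = 1}"
  have "finite R" unfolding R_def using finite_roots_unity[OF N] .
  have poly_prod_R: "poly (\<Prod>z\<in>R. [:-z, 1:]) x = x^N - 1" for x
    using monom_minus_1_eq_prod_roots_unity[OF N] by (metis R_def poly_monom poly_diff poly_1 mult_1)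
  show ?thesis
  proof (cases "odd N")
    case True
    then have "-1 \<notin> R" by (simp add: R_def)
    then have "(\<Prod>z\<in>R. factor_at_neg1 z) = poly (\<Prod>z\<in>R. [:-z, 1:]) (-1)"
      by (auto simp: factor_at_neg1_def poly_prod intro!: prod.cong)
    also have "\<dots> = -2" using poly_prod_R True by simp
    finally show ?thesis using True by (simp add: R_def)
  next
    case False
    then have "-1 \<in> R" by (simp add: R_def)
    define q where "q = (\<Prod>z\<in>R-{-1}. [:-z, 1:])"
    have split: "(\<Prod>z\<in>R. [:-z, 1:]) = [:1, 1:] * q"
      unfolding q_def using prod.remove[OF \<open>finite R\<close> \<open>-1 \<in> R\<close>, of "\<lambda>z. [:-z, 1:]"] by simp
    \<comment> \<open>\<open>q(-1)\<close> is the derivative of \<open>x\<^sup>N - 1 = (x + 1) q(x)\<close> at \<open>-1\<close>.\<close>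
    have "poly q (-1) = poly ([:1, 1:] * pderiv q + q * pderiv [:1, 1:]) (-1)"
      by (simp add: pderiv_pCons)
    also have "\<dots> = poly (pderiv (\<Prod>z\<in>R. [:-z, 1:])) (-1)"
      by (simp only: split pderiv_mult)
    also have "\<dots> = poly (pderiv (monom 1 N - 1)) (-1)"
      using monom_minus_1_eq_prod_roots_unity[OF N] by (simp add: R_def)
    also have "\<dots> = - of_nat N"
      using False N by (simp add: pderiv_diff pderiv_monom poly_monom)
    finally have q_neg1: "poly q (-1) = - of_nat N" .
    have "(\<Prod>z\<in>R. factor_at_neg1 z) = factor_at_neg1 (-1) * (\<Prod>z\<in>R-{-1}. factor_at_neg1 z)"
      using prod.remove[OF \<open>finite R\<close> \<open>-1 \<in> R\<close>] by simp
    also have "\<dots> = poly q (-1)"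
      by (auto simp: factor_at_neg1_def q_def poly_prod intro!: prod.cong)
    finally show ?thesis using q_neg1 False by (simp add: R_def)
  qed
qed

definition root_unity :: "nat \<Rightarrow> nat \<Rightarrow> complex" where
  "root_unity N k = exp (2 * of_real pi * \<i> * of_nat k / of_nat N)"

lemma bij_betw_root_unity:
  assumes N: "N \<ge> 1"
  shows "bij_betw (root_unity N) {1..N} {z. z^N = 1}"
  unfolding bij_betw_def
proof
  have mod_N: "k mod N = (if k = N then 0 else k)" if "k \<in> {1..N}" for k
    using that by auto
  show "inj_on (root_unity N) {1..N}"
  proof (rule inj_onI)
    fix j k assume "j \<in> {1..N}" "k \<in> {1..N}" "root_unity N j = root_unity N k"
    then show "j = k"
      using complex_root_unity_eq[OF N, of j k] mod_N[of j] mod_N[of k]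
      by (auto simp: root_unity_def split: if_splits)
  qed
  have "root_unity N N = root_unity N 0"
    using complex_root_unity_eq[OF N, of N 0] by (simp add: root_unity_def)
  then have "root_unity N k \<in> root_unity N ` {1..N}" if "k < N" for k
    using that N by (cases "k = 0") (metis atLeastAtMost_iff image_eqI order_refl, auto)
  then have "root_unity N ` {..<N} \<subseteq> root_unity N ` {1..N}" by blast
  moreover have "{z. z^N = 1} = root_unity N ` {..<N}"
    using complex_roots_unity[OF N] by (auto simp: root_unity_def)
  moreover have "root_unity N ` {1..N} \<subseteq> {z. z^N = 1}"
    using complex_root_unity N by (auto simp: root_unity_def)
  ultimately show "root_unity N ` {1..N} = {z. z^N = 1}" by blast
qed

lemma root_unity_mult:
  assumes "u dvd N" "N > 0"
  shows "root_unity N (u * k) = root_unity (N div u) k"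
proof -
  obtain q where "N = u * q" using assms(1) by blast
  with assms show ?thesis by (simp add: root_unity_def field_simps)
qed

lemma root_unity_double: "root_unity n (2 * j) = root_unity n j ^ 2"
  by (simp add: root_unity_def power2_eq_square exp_add[symmetric] field_simps)

lemma root_unity_eq_neg1_imp:
  assumes j: "j \<in> {1..n}" and z: "root_unity n j = -1"
  shows "2 * j = n"
proof -
  have n: "n \<ge> 1" using j by auto
  have "root_unity n (2 * j) = 1" using z by (simp add: root_unity_double)
  then obtain c where c: "2 * j = n * c"
    using complex_root_unity_eq_1[OF n, of "2 * j"] by (auto simp: root_unity_def)
  have "root_unity n n = 1" using complex_root_unity_eq_1[OF n, of n] by (simp add: root_unity_def)
  then have "j \<noteq> n" using z by auto
  then have "2 * j < n * 2" using j by auto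
  then have "c = 1" using c j by (cases c) auto
  then show ?thesis using c by simp
qed

lemma root_unity_half:
  assumes "n = 2 * h" "h \<ge> 1"
  shows "root_unity n h = -1"
proof -
  have "root_unity n h = exp (of_real pi * \<i>)" using assms by (simp add: root_unity_def field_simps)
  then show ?thesis by simp
qed

definition sieved_prod :: "nat \<Rightarrow> nat set \<Rightarrow> complex" where
  "sieved_prod N A = (\<Prod>k\<in>{k\<in>{1..N}. \<forall>t\<in>A. \<not> t dvd k}. factor_at_neg1 (root_unity N k))"

lemma sieved_prod_empty:
  assumes N: "N \<ge> 1"
  shows "sieved_prod N {} = (if odd N then -2 else - of_nat N)"
proof -
  have "{k\<in>{1..N}. \<forall>t\<in>{}. \<not> t dvd k} = {1..N}" by auto
  then have "sieved_prod N {} = (\<Prod>k\<in>{1..N}. factor_at_neg1 (root_unity N k))"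
    by (simp only: sieved_prod_def)
  also have "\<dots> = (\<Prod>z\<in>{z. z^N = 1}. factor_at_neg1 z)"
    by (rule prod.reindex_bij_betw[OF bij_betw_root_unity[OF N]])
  finally show ?thesis using prod_roots_unity_factor_at_neg1[OF N] by simp
qed

lemma sieved_prod_insert:
  assumes u: "u dvd N" and N: "N > 0" and cop: "\<forall>t\<in>A. coprime t u"
  shows "sieved_prod N A = sieved_prod N (insert u A) * sieved_prod (N div u) A"
proof -
  have "u > 0" using u N by (auto intro: Nat.gr0I)
  define X where "X = {k\<in>{1..N}. \<forall>t\<in>A. \<not> t dvd k}"
  define Y where "Y = {k\<in>{1..N}. \<forall>t\<in>insert u A. \<not> t dvd k}"
  define W where "W = {k\<in>{1..N div u}. \<forall>t\<in>A. \<not> t dvd k}"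
  have "X = Y \<union> (\<lambda>k. u * k) ` W"
  proof (intro equalityI subsetI)
    fix k assume k: "k \<in> X"
    show "k \<in> Y \<union> (\<lambda>k. u * k) ` W"
    proof (cases "u dvd k")
      case True
      then obtain l where l: "k = u * l" by blast
      then have "l \<le> N div u" using k \<open>u > 0\<close>
        by (auto simp: X_def) (metis div_mult_self1_is_m div_le_mono)
      then have "l \<in> W" using k l by (auto simp: X_def W_def)
      then show ?thesis using l by blast
    next
      case False then show ?thesis using k by (auto simp: X_def Y_def)
    qed
  next
    fix k assume "k \<in> Y \<union> (\<lambda>k. u * k) ` W"
    then show "k \<in> X"
    proof
      assume "k \<in> (\<lambda>k. u * k) ` W"
      then obtain l where l: "k = u * l" "l \<in> W" by blast
      have "k \<le> N" using l u by (auto simp: W_def) (metis dvd_mult_div_cancel mult_le_mono2)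
      moreover have "\<forall>t\<in>A. \<not> t dvd k"
        using l cop by (auto simp: W_def coprime_dvd_mult_right_iff)
      ultimately show ?thesis using l \<open>u > 0\<close> by (auto simp: X_def W_def)
    qed (auto simp: X_def Y_def)
  qed
  moreover have "Y \<inter> (\<lambda>k. u * k) ` W = {}" by (auto simp: Y_def)
  moreover have "inj_on (\<lambda>k. u * k) W" using \<open>u > 0\<close> by (auto simp: inj_on_def)
  ultimately have "sieved_prod N A = sieved_prod N (insert u A)
      * (\<Prod>k\<in>W. factor_at_neg1 (root_unity N (u * k)))"
    unfolding sieved_prod_def X_def[symmetric] Y_def[symmetric]
    by (simp add: prod.union_disjoint prod.reindex Y_def W_def)
  then show ?thesis by (simp add: sieved_prod_def W_def root_unity_mult[OF u N])
qed

lemma dvd_div_if_coprime: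
  fixes t u N :: nat
  assumes "t dvd N" "u dvd N" "coprime t u"
  shows "t dvd N div u"
  using assms by (metis coprime_dvd_mult_right_iff dvd_mult_div_cancel)

lemma sieved_prod_odd:
  assumes "finite A" "pairwise coprime A" "\<forall>t\<in>A. t dvd N" "odd N"
  shows "sieved_prod N A = (if A = {} then -2 else 1)"
  using assms
proof (induction A arbitrary: N rule: finite_induct)
  case empty
  then show ?case using sieved_prod_empty[of N] by (cases N) auto
next
  case (insert u A)
  have "N > 0" "u dvd N" using insert.prems by (auto intro: Nat.gr0I)
  have cop: "\<forall>t\<in>A. coprime t u" using insert.prems(1) insert.hyps by (auto simp: pairwise_def)
  have "odd (N div u)" using insert.prems \<open>u dvd N\<close> by (metis dvd_mult_div_cancel even_mult_iff)
  moreover have "\<forall>t\<in>A. t dvd N div u" using insert.prems cop \<open>u dvd N\<close> by (auto intro: dvd_div_if_coprime)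
  moreover have "pairwise coprime A" using insert.prems(1) by (rule pairwise_subset) auto
  ultimately have "sieved_prod N A = sieved_prod (N div u) A"
    using insert.IH insert.prems by auto
  moreover have "sieved_prod N A = sieved_prod N (insert u A) * sieved_prod (N div u) A"
    using sieved_prod_insert[OF \<open>u dvd N\<close> \<open>N > 0\<close> cop] .
  moreover have "sieved_prod (N div u) A \<noteq> 0"
    using insert.IH \<open>odd (N div u)\<close> \<open>\<forall>t\<in>A. t dvd N div u\<close> \<open>pairwise coprime A\<close> by auto
  ultimately show ?case by auto
qed

lemma sieved_prod_even:
  assumes "finite A" "pairwise coprime A" "\<forall>t\<in>A. t dvd N \<and> odd t" "even N" "N > 0"
  shows "sieved_prod N A = (if A = {} then - of_nat N else if card A = 1 then of_nat (\<Prod>A) else 1)"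
  using assms
proof (induction A arbitrary: N rule: finite_induct)
  case empty
  then show ?case using sieved_prod_empty[of N] by simp
next
  case (insert u A)
  define v :: "nat \<Rightarrow> nat set \<Rightarrow> complex"
    where "v M B = (if B = {} then - of_nat M else if card B = 1 then of_nat (\<Prod>B) else 1)" for M B
  have "u dvd N" "odd u" using insert.prems by auto
  have cop: "\<forall>t\<in>A. coprime t u" using insert.prems(1) insert.hyps by (auto simp: pairwise_def)
  have N_eq: "N = u * (N div u)" using \<open>u dvd N\<close> by simp
  have "even (N div u)" using insert.prems \<open>odd u\<close> N_eq by (metis even_mult_iff)
  moreover have "N div u > 0" using N_eq insert.prems by (metis gr0I mult_0_right)
  moreover have "\<forall>t\<in>A. t dvd N div u \<and> odd t"
    using insert.prems cop \<open>u dvd N\<close> by (auto intro: dvd_div_if_coprime)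
  moreover have "pairwise coprime A" using insert.prems(1) by (rule pairwise_subset) auto
  ultimately have IH: "sieved_prod N A = v N A" "sieved_prod (N div u) A = v (N div u) A"
    using insert.IH insert.prems unfolding v_def by auto
  have "0 \<notin> A" using insert.prems by auto
  then have "v (N div u) A \<noteq> 0"
    using \<open>N div u > 0\<close> insert.hyps by (auto simp: v_def)
  moreover have "v N (insert u A) * v (N div u) A = v N A"
  proof -
    consider "A = {}" | "card A = 1" | "A \<noteq> {}" "card A \<noteq> 1" by blast
    then show ?thesis
    proof cases
      case 1
      then show ?thesis using N_eq by (simp add: v_def) (metis of_nat_mult)
    qed (use insert.hyps in \<open>auto simp: v_def\<close>)
  qed
  moreover have "sieved_prod N A = sieved_prod N (insert u A) * sieved_prod (N div u) A"
    using sieved_prod_insert[OF \<open>u dvd N\<close> insert.prems(4) cop] .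
  ultimately have "sieved_prod N (insert u A) = v N (insert u A)"
    using IH by (metis mult_cancel_right)
  then show ?case by (simp add: v_def)
qed

lemma gcd_star_eq_1_iff:
  assumes "j \<ge> 1"
  shows "gcd_star j n = 1 \<longleftrightarrow> (\<forall>d. d dvd j \<and> unitary_dvd d n \<longrightarrow> d = 1)"
proof -
  define D where "D = {d. d dvd j \<and> unitary_dvd d n}"
  have "finite D" unfolding D_def using assms
    by (intro finite_subset[OF _ finite_divisors_nat[of j]]) auto
  moreover have one: "1 \<in> D" by (simp add: D_def unitary_dvd_def)
  moreover have "d \<ge> 1" if "d \<in> D" for d
    using that assms by (auto simp: D_def intro: Nat.gr0I)
  ultimately have "Max D = 1 \<longleftrightarrow> D = {1}"
    using Max_ge[OF \<open>finite D\<close>] by (metis Max_singleton antisym singleton_iff subsetI subset_antisym)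
  then show ?thesis using one by (auto simp: gcd_star_def D_def)
qed

definition prime_power_parts :: "nat \<Rightarrow> nat set" where
  "prime_power_parts n = (\<lambda>p. p ^ multiplicity p n) ` prime_factors n"

lemma finite_prime_power_parts [simp]: "finite (prime_power_parts n)"
  by (simp add: prime_power_parts_def)

lemma prime_power_parts_dvd: "t \<in> prime_power_parts n \<Longrightarrow> t dvd n"
  by (auto simp: prime_power_parts_def multiplicity_dvd)

lemma pairwise_coprime_prime_power_parts: "pairwise coprime (prime_power_parts n)"
  by (auto simp: pairwise_def prime_power_parts_def intro!: coprime_power_left_iff[THEN iffD2]
      coprime_power_right_iff[THEN iffD2] primes_coprime)

lemma inj_on_prime_power_parts: "inj_on (\<lambda>p. p ^ multiplicity p n) (prime_factors n)"
proof (rule inj_onI)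
  fix p q assume p: "p \<in> prime_factors n" and q: "q \<in> prime_factors n"
    and eq: "p ^ multiplicity p n = q ^ multiplicity q n"
  have "multiplicity p n > 0" using p by (simp add: prime_factors_multiplicity)
  then have "p dvd q ^ multiplicity q n" using eq by (metis dvd_power gr0_conv_Suc)
  then have "p dvd q" using p by (auto intro: prime_dvd_power)
  then show "p = q" using p q by (auto intro: primes_dvd_imp_eq)
qed

lemma card_prime_power_parts: "card (prime_power_parts n) = card (prime_factors n)"
  unfolding prime_power_parts_def by (rule card_image[OF inj_on_prime_power_parts])

lemma prod_prime_power_parts:
  assumes "n > 0"
  shows "\<Prod>(prime_power_parts n) = n"
  unfolding prime_power_parts_def using prod.reindex[OF inj_on_prime_power_parts[of n], of id]
    prime_factorization_nat[of n] assms by simp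

lemma prime_power_parts_mult:
  assumes "coprime m k" "m > 0" "k > 0"
  shows "prime_power_parts (m * k) = prime_power_parts m \<union> prime_power_parts k"
proof -
  have mult_eq: "multiplicity p (m * k) = multiplicity p m + multiplicity p k" if "prime p" for p
    using that assms by (simp add: prime_elem_multiplicity_mult_distrib)
  have "multiplicity p k = 0" if "p \<in> prime_factors m" for p
    using that assms(1) by (meson coprime_common_divisor in_prime_factors_iff not_prime_unit
        not_dvd_imp_multiplicity_0)
  moreover have "multiplicity p m = 0" if "p \<in> prime_factors k" for p
    using that assms(1) by (meson coprime_common_divisor in_prime_factors_iff not_prime_unit
        not_dvd_imp_multiplicity_0)
  ultimately have "(\<lambda>p. p ^ multiplicity p (m * k)) ` prime_factors m = prime_power_parts m"
    and "(\<lambda>p. p ^ multiplicity p (m * k)) ` prime_factors k = prime_power_parts k"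
    using mult_eq by (auto simp: prime_power_parts_def in_prime_factors_imp_prime intro!: image_cong)
  then show ?thesis
    using assms by (simp add: prime_power_parts_def prime_factors_product image_Un)
qed

lemma prime_power_parts_prime_power:
  assumes "prime p" "a \<ge> 1"
  shows "prime_power_parts (p ^ a) = {p ^ a}"
  using assms by (simp add: prime_power_parts_def prime_factorization_prime_power)

lemma unitary_dvd_prime_power_part:
  assumes "n \<ge> 1" "p \<in> prime_factors n"
  shows "unitary_dvd (p ^ multiplicity p n) n"
proof -
  have "prime p" using assms by auto
  moreover have "\<not> p dvd (n div p ^ multiplicity p n)"
    using assms \<open>prime p\<close> by (intro multiplicity_decompose) (auto simp: prime_gt_1_nat)
  ultimately have "coprime p (n div p ^ multiplicity p n)"
    by (rule prime_imp_coprime)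
  then show ?thesis
    by (simp add: unitary_dvd_def multiplicity_dvd coprime_power_left_iff)
qed

lemma unitary_dvd_imp_prime_power_part_dvd:
  assumes "n \<ge> 1" "unitary_dvd d n" "d \<noteq> 1"
  shows "\<exists>t\<in>prime_power_parts n. t dvd d"
proof -
  have "d dvd n" and cop: "coprime d (n div d)" using assms(2) by (auto simp: unitary_dvd_def)
  then have "d \<noteq> 0" "n div d \<noteq> 0" using assms(1) by auto
  obtain p where p: "prime p" "p dvd d" using assms(3) prime_factor_nat by blast
  then have "p \<in> prime_factors n"
    using \<open>d dvd n\<close> assms(1) by (auto simp: prime_factors_dvd intro: dvd_trans)
  have "\<not> p dvd (n div d)" using cop p by (meson coprime_common_divisor not_prime_unit)
  then have "multiplicity p n = multiplicity p d"
    using prime_elem_multiplicity_mult_distrib[of p d "n div d"] p \<open>d \<noteq> 0\<close> \<open>n div d \<noteq> 0\<close>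
      \<open>d dvd n\<close> by (simp add: not_dvd_imp_multiplicity_0)
  then have "p ^ multiplicity p n dvd d" by (simp add: multiplicity_dvd)
  then show ?thesis using \<open>p \<in> prime_factors n\<close> by (auto simp: prime_power_parts_def)
qed

lemma gcd_star_eq_1_iff_prime_power_parts:
  assumes "n \<ge> 1" "j \<ge> 1"
  shows "gcd_star j n = 1 \<longleftrightarrow> (\<forall>t\<in>prime_power_parts n. \<not> t dvd j)"
proof
  assume "gcd_star j n = 1"
  then have trivial: "d = 1" if "d dvd j" "unitary_dvd d n" for d
    using that gcd_star_eq_1_iff[OF assms(2)] by blast
  show "\<forall>t\<in>prime_power_parts n. \<not> t dvd j"
  proof (intro ballI notI)
    fix t assume "t \<in> prime_power_parts n" "t dvd j"
    then obtain p where p: "p \<in> prime_factors n" "t = p ^ multiplicity p n"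
      by (auto simp: prime_power_parts_def)
    then have "multiplicity p n > 0" "prime p" by (auto simp: prime_factors_multiplicity)
    then have "t \<noteq> 1" using p(2) by (auto dest: prime_gt_1_nat)
    then show False
      using trivial[OF \<open>t dvd j\<close>] unitary_dvd_prime_power_part[OF assms(1) p(1)] p(2) by blast
  qed
next
  assume "\<forall>t\<in>prime_power_parts n. \<not> t dvd j"
  then show "gcd_star j n = 1"
    using unitary_dvd_imp_prime_power_part_dvd[OF assms(1)] gcd_star_eq_1_iff[OF assms(2)]
    by (meson dvd_trans)
qed

lemma poly_Phi_star_neg1:
  "poly (Phi_star n) (-1) = (\<Prod>j\<in>{j\<in>{1..n}. gcd_star j n = 1}. -1 - root_unity n j)"
  unfolding Phi_star_def poly_prod by (intro prod.cong) (auto simp: root_unity_def)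

lemma poly_Phi_star_neg1_eq_sieved_prod:
  assumes n: "n \<ge> 1" and half: "odd n \<or> (\<exists>t\<in>prime_power_parts n. t dvd n div 2)"
  shows "poly (Phi_star n) (-1) = sieved_prod n (prime_power_parts n)"
proof -
  have S: "{j\<in>{1..n}. gcd_star j n = 1} = {j\<in>{1..n}. \<forall>t\<in>prime_power_parts n. \<not> t dvd j}"
    using gcd_star_eq_1_iff_prime_power_parts[OF n] by auto
  \<comment> \<open>the only \<open>j\<close> with \<open>\<zeta>\<^sup>j = -1\<close> is \<open>n/2\<close>, which is sieved out\<close>
  have "root_unity n j \<noteq> -1" if "j \<in> {1..n}" "\<forall>t\<in>prime_power_parts n. \<not> t dvd j" for j
    using root_unity_eq_neg1_imp[OF that(1)] that(2) half by fastforce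
  then show ?thesis
    unfolding poly_Phi_star_neg1 S sieved_prod_def
    by (intro prod.cong) (auto simp: factor_at_neg1_def)
qed

lemma Phi_star_neg1_odd:
  assumes "odd n"
  shows "poly (Phi_star n) (-1) = (if n = 1 then -2 else 1)"
proof -
  have "n \<ge> 1" using assms by (cases n) auto
  then have "poly (Phi_star n) (-1) = sieved_prod n (prime_power_parts n)"
    using assms by (intro poly_Phi_star_neg1_eq_sieved_prod) auto
  also have "\<dots> = (if prime_power_parts n = {} then -2 else 1)"
    using assms by (intro sieved_prod_odd)
      (auto simp: pairwise_coprime_prime_power_parts prime_power_parts_dvd)
  also have "prime_power_parts n = {} \<longleftrightarrow> n = 1"
    using \<open>n \<ge> 1\<close> by (auto simp: prime_power_parts_def prime_factorization_empty_iff)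
  finally show ?thesis .
qed

lemma Phi_star_neg1_2_power:
  assumes "a \<ge> 1"
  shows "poly (Phi_star (2 ^ a)) (-1) = 0"
proof -
  define h :: nat where "h = 2 ^ (a - 1)"
  have "2 ^ a = 2 * h" "h \<ge> 1" using assms by (simp_all add: h_def power_Suc[symmetric])
  then have "\<not> 2 ^ a dvd h" by (auto dest: dvd_imp_le)
  then have "h \<in> {j\<in>{1..2 ^ a}. gcd_star j (2 ^ a) = 1}"
    using gcd_star_eq_1_iff_prime_power_parts[of "2 ^ a" h] prime_power_parts_prime_power[of 2 a]
      assms \<open>2 ^ a = 2 * h\<close> \<open>h \<ge> 1\<close> by auto
  moreover have "-1 - root_unity (2 ^ a) h = 0"
    using root_unity_half[OF \<open>2 ^ a = 2 * h\<close> \<open>h \<ge> 1\<close>] by simp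
  ultimately show ?thesis
    unfolding poly_Phi_star_neg1 by (intro prod_zero) auto
qed

lemma Phi_star_neg1_2_power_mult_odd:
  assumes "a \<ge> 1" "odd m" "m > 1"
  shows "poly (Phi_star (2 ^ a * m)) (-1) = (if card (prime_factors m) = 1 then of_nat m else 1)"
proof -
  define n where "n = 2 ^ a * m"
  define A where "A = prime_power_parts m"
  have "coprime (2 ^ a) m" using assms(2) by (simp add: coprime_power_left_iff)
  then have parts_n: "prime_power_parts n = insert (2 ^ a) A"
    using prime_power_parts_mult[of "2 ^ a" m] prime_power_parts_prime_power[of 2 a] assms
    by (simp add: n_def A_def)
  have "A \<noteq> {}" using assms(3) by (auto simp: A_def prime_power_parts_def prime_factorization_empty_iff)
  have A_odd: "\<forall>t\<in>A. t dvd m \<and> odd t"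
    using assms(2) prime_power_parts_dvd dvd_trans[of 2 _ m] unfolding A_def by blast
  have "finite A" "pairwise coprime A"
    by (simp_all add: A_def pairwise_coprime_prime_power_parts)
  have "m dvd n div 2" using assms(1) by (cases a) (simp_all add: n_def)
  then have "poly (Phi_star n) (-1) = sieved_prod n (insert (2 ^ a) A)"
    using poly_Phi_star_neg1_eq_sieved_prod[of n] parts_n A_odd \<open>A \<noteq> {}\<close> assms(3)
    by (fastforce simp: n_def dest: dvd_trans)
  \<comment> \<open>sieving by \<open>2\<^sup>a\<close> divides by \<open>sieved_prod m A = 1\<close>\<close>
  also have "\<dots> = sieved_prod n A"
    using sieved_prod_insert[of "2 ^ a" n A] sieved_prod_odd[OF \<open>finite A\<close> \<open>pairwise coprime A\<close>, of m]
      A_odd \<open>A \<noteq> {}\<close> \<open>coprime (2 ^ a) m\<close> assms by (simp add: n_def coprime_commute)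
  also have "\<dots> = (if card A = 1 then of_nat (\<Prod>A) else 1)"
    using sieved_prod_even[OF \<open>finite A\<close> \<open>pairwise coprime A\<close>, of n] A_odd \<open>A \<noteq> {}\<close> assms
    by (auto simp: n_def dest: dvd_trans)
  finally show ?thesis
    using card_prime_power_parts[of m] prod_prime_power_parts[of m] assms(3) by (simp add: n_def A_def)
qed

lemma even_nat_eq_2_power_mult_odd:
  fixes n :: nat
  assumes "even n" "n > 0"
  obtains a m where "a \<ge> 1" "odd m" "n = 2 ^ a * m"
proof -
  obtain m where m: "n = 2 ^ multiplicity 2 n * m" "odd m"
    using multiplicity_decompose'[of n 2] assms(2) by auto
  then have "multiplicity 2 n \<noteq> 0" using assms(1) by (metis mult_1 power_0)
  with m show ?thesis using that[of "multiplicity 2 n" m] by linarith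
qed

lemma card_prime_factors_eq_1_iff:
  fixes m :: nat
  assumes "m > 0"
  shows "card (prime_factors m) = 1 \<longleftrightarrow> (\<exists>p b. prime p \<and> b \<ge> 1 \<and> m = p ^ b)"
proof
  assume "card (prime_factors m) = 1"
  then obtain p where p: "prime_factors m = {p}" by (auto simp: card_1_singleton_iff)
  then have "m = p ^ multiplicity p m" "multiplicity p m \<ge> 1" "prime p"
    using prime_factorization_nat[of m] assms by (auto simp: prime_factors_multiplicity)
  then show "\<exists>p b. prime p \<and> b \<ge> 1 \<and> m = p ^ b" by blast
qed (auto simp: prime_factorization_prime_power)

theorem lemma4p3:
  fixes n :: nat
  assumes "n \<ge> 1"
  shows "(n = 1 \<longrightarrow> poly (Phi_star n) (-1) = -2)
       \<and> (\<forall>a::nat. a \<ge> 1 \<and> n = 2 ^ a \<longrightarrow> poly (Phi_star n) (-1) = 0)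
       \<and> (\<forall>(a::nat) (b::nat) (p::nat). prime p \<and> odd p \<and> a \<ge> 1 \<and> b \<ge> 1 \<and> n = 2 ^ a * p ^ b
            \<longrightarrow> poly (Phi_star n) (-1) = of_nat (p ^ b))
       \<and> (n \<noteq> 1 \<and> \<not> (\<exists>a::nat. a \<ge> 1 \<and> n = 2 ^ a)
            \<and> \<not> (\<exists>(a::nat) (b::nat) (p::nat). prime p \<and> odd p \<and> a \<ge> 1 \<and> b \<ge> 1 \<and> n = 2 ^ a * p ^ b)
            \<longrightarrow> poly (Phi_star n) (-1) = 1)"
proof (intro conjI impI allI)
  assume "n = 1"
  then show "poly (Phi_star n) (-1) = -2" using Phi_star_neg1_odd[of 1] by simp
next
  fix a assume "a \<ge> 1 \<and> n = 2 ^ a"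
  then show "poly (Phi_star n) (-1) = 0" using Phi_star_neg1_2_power by auto
next
  fix a b p assume H: "prime p \<and> odd p \<and> a \<ge> 1 \<and> b \<ge> 1 \<and> n = 2 ^ a * p ^ b"
  then have "card (prime_factors (p ^ b)) = 1" "p ^ b > 1"
    using card_prime_factors_eq_1_iff[of "p ^ b"] one_less_power[OF prime_gt_1_nat[of p], of b]
    by auto
  then show "poly (Phi_star n) (-1) = of_nat (p ^ b)"
    using Phi_star_neg1_2_power_mult_odd[of a "p ^ b"] H by simp
next
  assume H: "n \<noteq> 1 \<and> \<not> (\<exists>a::nat. a \<ge> 1 \<and> n = 2 ^ a)
    \<and> \<not> (\<exists>(a::nat) (b::nat) (p::nat). prime p \<and> odd p \<and> a \<ge> 1 \<and> b \<ge> 1 \<and> n = 2 ^ a * p ^ b)"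
  show "poly (Phi_star n) (-1) = 1"
  proof (cases "odd n")
    case True
    then show ?thesis using Phi_star_neg1_odd H by simp
  next
    case False
    then obtain a m where am: "a \<ge> 1" "odd m" "n = 2 ^ a * m"
      using even_nat_eq_2_power_mult_odd[of n] assms by auto
    have "card (prime_factors m) \<noteq> 1"
    proof
      assume "card (prime_factors m) = 1"
      then obtain p b where "prime p" "b \<ge> 1" "m = p ^ b"
        using card_prime_factors_eq_1_iff odd_pos[OF am(2)] by blast
      then show False using am H by auto
    qed
    moreover have "m > 1" using am H by (cases m) auto
    ultimately show ?thesis using Phi_star_neg1_2_power_mult_odd am by simp
  qed
qed

end
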